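(* Let $\bm z\in\mathbb{R}^d$ and $\alpha>1$, and let $\tau^\star=\tau^\star(\alpha)$ be the unique scalar with $\sum_i [(\alpha-1)(z_i-\tau^\star)]_+^{1/(\alpha-1)}=1$, and $p_i^\star=[(\alpha-1)(z_i-\tau^\star)]_+^{1/(\alpha-1)}$. At any $\alpha$ where $\tau^\star$ is differentiable in $\alpha$ and the support $\mathcal S=\{i:p_i^\star>0\}$ is locally constant in $\alpha$, $$\frac{\partial\tau^\star}{\partial\alpha}=\frac{\frac{1}{(\alpha-1)^2}+\frac{\mathsf H^S(\bm p^\star)}{\alpha-1}}{\sum_{i\in\mathcal S}(p_i^\star)^{2-\alpha}},$$ where $\mathsf H^S(\bm p)=-\sum_j p_j\log p_j$ is the Shannon entropy (with $0\log0=0$).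
   Context: Here $[t]_+=\max(t,0)$, and $\bm p^\star$ is exactly the $\alpha$-entmax of $\bm z$, i.e. $\arg\max_{\bm p\in\triangle^d}\bm p^\top\bm z+\frac{1}{\alpha(\alpha-1)}\sum_j(p_j-p_j^\alpha)$, with $\triangle^d=\{\bm p\in\mathbb{R}^d:p_i\ge0,\sum_ip_i=1\}$. *)

theory Defs
  imports "HOL-Analysis.Analysis"
begin

text \<open>Coordinates are indexed by a finite type 'n (so d = CARD('n)).\<close>

definition pos_part :: "real \<Rightarrow> real" where
  "pos_part t = max t 0"

definition entmax_mass :: "('n::finite \<Rightarrow> real) \<Rightarrow> real \<Rightarrow> real \<Rightarrow> real" where
  "entmax_mass z \<alpha> \<tau> = (\<Sum>i\<in>UNIV. (pos_part ((\<alpha> - 1) * (z i - \<tau>))) powr (1 / (\<alpha> - 1)))"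

definition entmax_tau :: "('n::finite \<Rightarrow> real) \<Rightarrow> real \<Rightarrow> real" where
  "entmax_tau z \<alpha> = (THE \<tau>. entmax_mass z \<alpha> \<tau> = 1)"

definition entmax_p :: "('n::finite \<Rightarrow> real) \<Rightarrow> real \<Rightarrow> 'n \<Rightarrow> real" where
  "entmax_p z \<alpha> i = (pos_part ((\<alpha> - 1) * (z i - entmax_tau z \<alpha>))) powr (1 / (\<alpha> - 1))"

definition entmax_support :: "('n::finite \<Rightarrow> real) \<Rightarrow> real \<Rightarrow> 'n set" where
  "entmax_support z \<alpha> = {i. entmax_p z \<alpha> i > 0}"

definition shannon_entropy :: "('n::finite \<Rightarrow> real) \<Rightarrow> real" where
  "shannon_entropy p = - (\<Sum>j\<in>UNIV. if p j = 0 then 0 else p j * ln (p j))"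

end

theory Submission
  imports Defs
begin

text \<open>While the support S stays fixed, tau(a) is implicitly defined by
  sum over i in S of ((a - 1)(z_i - tau(a)))^(1/(a - 1)) = 1. Differentiating this identity at alpha,
  summand i contributes p_i/(alpha-1)^2 - p_i ln p_i/(alpha-1) - tau' p_i^(2-alpha); summing and using
  sum p_i = 1 leaves 0 = 1/(alpha-1)^2 + H(p)/(alpha-1) - tau' sum p_i^(2-alpha), which is solved for tau'.\<close>

lemma pos_part_powr_mono:
  assumes "c > 0" "s \<le> t"
  shows "pos_part s powr c \<le> pos_part t powr c"
  using assms by (intro powr_mono2) (auto simp: pos_part_def)

lemma pos_part_powr_strict_mono:
  assumes "c > 0" "s < t" "pos_part s powr c > 0"
  shows "pos_part s powr c < pos_part t powr c"
proof -
  have "s > 0"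
    using assms(3) by (auto simp: pos_part_def max_def split: if_splits)
  then show ?thesis
    using assms by (intro powr_less_mono2) (auto simp: pos_part_def)
qed

lemma entmax_mass_strict_antimono:
  assumes "a > 1" "t1 < t2" "entmax_mass z a t2 > 0"
  shows "entmax_mass z a t2 < entmax_mass z a t1"
proof -
  obtain j where j: "pos_part ((a - 1) * (z j - t2)) powr (1 / (a - 1)) > 0"
    using assms(3) unfolding entmax_mass_def
    by (metis (no_types, lifting) less_eq_real_def powr_ge_zero sum.neutral)
  have "pos_part ((a - 1) * (z i - t2)) powr (1 / (a - 1))
      \<le> pos_part ((a - 1) * (z i - t1)) powr (1 / (a - 1))" for i
    using assms by (intro pos_part_powr_mono mult_left_mono) auto
  moreover have "pos_part ((a - 1) * (z j - t2)) powr (1 / (a - 1))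
      < pos_part ((a - 1) * (z j - t1)) powr (1 / (a - 1))"
    using assms j by (intro pos_part_powr_strict_mono mult_strict_left_mono) auto
  ultimately show ?thesis
    unfolding entmax_mass_def by (intro sum_strict_mono_ex1) auto
qed

lemma continuous_on_entmax_mass:
  assumes "a > 1"
  shows "continuous_on A (entmax_mass z a)"
  unfolding entmax_mass_def pos_part_def
  using assms by (intro continuous_on_sum continuous_on_powr') (auto intro!: continuous_intros)

lemma entmax_mass_eq_1_unique:
  fixes z :: "'n::finite \<Rightarrow> real"
  assumes a: "a > 1"
  shows "\<exists>!t. entmax_mass z a t = 1"
proof -
  define m where "m = Max (range z)"
  have "m \<in> range z"
    unfolding m_def by (rule Max_in) auto
  then obtain i0 where i0: "z i0 = m" by auto
  have "entmax_mass z a m = 0"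
    unfolding entmax_mass_def m_def using a
    by (intro sum.neutral ballI) (simp add: pos_part_def mult_nonneg_nonpos)
  moreover have "entmax_mass z a (m - 1 / (a - 1)) \<ge> 1"
  proof -
    have "pos_part ((a - 1) * (z i0 - (m - 1 / (a - 1)))) = 1"
      using a i0 by (simp add: pos_part_def field_simps)
    then have "pos_part ((a - 1) * (z i0 - (m - 1 / (a - 1)))) powr (1 / (a - 1)) = 1"
      by simp
    then show ?thesis
      unfolding entmax_mass_def
      by (metis (no_types, lifting) UNIV_I finite_class.finite_UNIV member_le_sum powr_ge_zero)
  qed
  ultimately obtain t where t: "entmax_mass z a t = 1"
    using IVT2'[of "entmax_mass z a" m 1 "m - 1 / (a - 1)"] a continuous_on_entmax_mass[OF a]
    by auto
  moreover have "t' = t" if "entmax_mass z a t' = 1" for t'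
    using entmax_mass_strict_antimono[OF a, of t t' z] entmax_mass_strict_antimono[OF a, of t' t z]
      t that by (cases "t' < t") (auto simp: not_less_iff_gr_or_eq)
  ultimately show ?thesis by blast
qed

lemma entmax_mass_tau:
  assumes "a > 1"
  shows "entmax_mass z a (entmax_tau z a) = 1"
  unfolding entmax_tau_def using theI'[OF entmax_mass_eq_1_unique[OF assms]] .

lemma entmax_p_nonneg: "entmax_p z a i \<ge> 0"
  by (simp add: entmax_p_def)

lemma in_entmax_support_iff:
  "i \<in> entmax_support z a \<longleftrightarrow> (a - 1) * (z i - entmax_tau z a) > 0"
  by (auto simp: entmax_support_def entmax_p_def pos_part_def max_def)

lemma entmax_p_in_support:
  assumes "i \<in> entmax_support z a"
  shows "entmax_p z a i = ((a - 1) * (z i - entmax_tau z a)) powr (1 / (a - 1))"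
  using assms by (simp add: in_entmax_support_iff entmax_p_def pos_part_def)

lemma entmax_p_notin_support:
  assumes "i \<notin> entmax_support z a"
  shows "entmax_p z a i = 0"
  using assms entmax_p_nonneg[of z a i] by (simp add: entmax_support_def)

lemma sum_entmax_p_support:
  assumes "a > 1"
  shows "(\<Sum>i\<in>entmax_support z a. entmax_p z a i) = 1"
proof -
  have "(\<Sum>i\<in>entmax_support z a. entmax_p z a i) = (\<Sum>i\<in>UNIV. entmax_p z a i)"
    by (rule sum.mono_neutral_left) (auto simp: entmax_p_notin_support)
  also have "\<dots> = 1"
    using entmax_mass_tau[OF assms, of z] by (simp add: entmax_mass_def entmax_p_def)
  finally show ?thesis .
qed

lemma shannon_entropy_entmax_p:
  "shannon_entropy (entmax_p z a)
     = - (\<Sum>i\<in>entmax_support z a. entmax_p z a i * ln (entmax_p z a i))"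
proof -
  let ?h = "\<lambda>j. if entmax_p z a j = 0 then 0 else entmax_p z a j * ln (entmax_p z a j)"
  have "(\<Sum>j\<in>UNIV. ?h j) = (\<Sum>j\<in>entmax_support z a. ?h j)"
    by (rule sum.mono_neutral_right) (auto simp: entmax_p_notin_support)
  also have "\<dots> = (\<Sum>j\<in>entmax_support z a. entmax_p z a j * ln (entmax_p z a j))"
    by (rule sum.cong) (auto simp: entmax_support_def)
  finally show ?thesis by (simp add: shannon_entropy_def)
qed

lemma entmax_support_nonempty:
  assumes "a > 1"
  shows "entmax_support z a \<noteq> {}"
  using sum_entmax_p_support[OF assms, of z] by auto

text \<open>The derivative is expressed through the value q alone, since q^(2 - alpha) = q / ((alpha - 1)(x - t alpha)).\<close>
lemma has_real_derivative_entmax_summand: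
  fixes t :: "real \<Rightarrow> real"
  assumes \<alpha>: "\<alpha> > 1" and t: "(t has_real_derivative T) (at \<alpha>)"
    and u: "(\<alpha> - 1) * (x - t \<alpha>) > 0"
  defines "q \<equiv> ((\<alpha> - 1) * (x - t \<alpha>)) powr (1 / (\<alpha> - 1))"
  shows "((\<lambda>a. ((a - 1) * (x - t a)) powr (1 / (a - 1))) has_real_derivative
           q / (\<alpha> - 1)^2 - q * ln q / (\<alpha> - 1) - T * q powr (2 - \<alpha>)) (at \<alpha>)"
proof -
  define u where "u = (\<alpha> - 1) * (x - t \<alpha>)"
  have "u > 0" using assms by (simp add: u_def)
  have du: "((\<lambda>a. (a - 1) * (x - t a)) has_real_derivative (x - t \<alpha>) - (\<alpha> - 1) * T) (at \<alpha>)"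
    by (rule derivative_eq_intros refl t | simp)+
  have dc: "((\<lambda>a. 1 / (a - 1)) has_real_derivative - 1 / (\<alpha> - 1)^2) (at \<alpha>)"
    using \<alpha> by (auto intro!: derivative_eq_intros simp: power2_eq_square)
  have ln_q: "ln q = ln u / (\<alpha> - 1)"
    using \<open>u > 0\<close> by (simp add: q_def u_def ln_powr)
  have "q powr (2 - \<alpha>) = u powr (1 / (\<alpha> - 1) - 1)"
    using \<alpha> by (simp add: q_def u_def powr_powr field_simps)
  also have "\<dots> = q / u"
    using \<open>u > 0\<close> by (simp add: q_def u_def powr_diff)
  finally have q_pow: "q powr (2 - \<alpha>) = q / u" .
  have x_t: "x - t \<alpha> = u / (\<alpha> - 1)"
    using \<alpha> by (simp add: u_def)
  have "q * (- 1 / e^2 * ln u + (u / e - e * T) * (1 / e) / u)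
      = q / e^2 - q * (ln u / e) / e - T * (q / u)" if "e > 0" for e
    using that \<open>u > 0\<close> by (simp add: field_simps power2_eq_square)
  then have "q * (- 1 / (\<alpha> - 1)^2 * ln u + ((x - t \<alpha>) - (\<alpha> - 1) * T) * (1 / (\<alpha> - 1)) / u)
      = q / (\<alpha> - 1)^2 - q * ln q / (\<alpha> - 1) - T * q powr (2 - \<alpha>)"
    unfolding ln_q q_pow x_t using \<alpha> by simp
  then show ?thesis
    using has_real_derivative_powr'[OF du dc] u by (simp add: q_def u_def)
qed

lemma entmax_summands_eventually_sum_1:
  assumes "\<alpha> > 1"
    and "eventually (\<lambda>a. entmax_support z a = entmax_support z \<alpha>) (nhds \<alpha>)"
  shows "eventually (\<lambda>a. (\<Sum>i\<in>entmax_support z \<alpha>.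
           ((a - 1) * (z i - entmax_tau z a)) powr (1 / (a - 1))) = 1) (nhds \<alpha>)"
proof -
  have "eventually (\<lambda>a. a > 1) (nhds \<alpha>)"
    using eventually_nhds_in_open[of "{1<..}" \<alpha>] assms(1) by simp
  with assms(2) show ?thesis
  proof eventually_elim
    case (elim a)
    then have "(\<Sum>i\<in>entmax_support z \<alpha>. ((a - 1) * (z i - entmax_tau z a)) powr (1 / (a - 1)))
        = (\<Sum>i\<in>entmax_support z a. entmax_p z a i)"
      by (intro sum.cong) (auto simp: entmax_p_in_support)
    also have "\<dots> = 1"
      using sum_entmax_p_support[OF elim(2), of z] elim(1) by simp
    finally show ?case .
  qed
qed

theorem mainTheorem2:
  fixes z :: "'n::finite \<Rightarrow> real" and \<alpha> :: real
  assumes "\<alpha> > 1"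
    and "(\<lambda>a. entmax_tau z a) differentiable (at \<alpha>)"
    and "eventually (\<lambda>a. entmax_support z a = entmax_support z \<alpha>) (nhds \<alpha>)"
  shows "((\<lambda>a. entmax_tau z a) has_real_derivative
           ((1 / (\<alpha> - 1)^2 + shannon_entropy (entmax_p z \<alpha>) / (\<alpha> - 1))
            / (\<Sum>i\<in>entmax_support z \<alpha>. (entmax_p z \<alpha> i) powr (2 - \<alpha>)))) (at \<alpha>)"
proof -
  define S where "S = entmax_support z \<alpha>"
  define p where "p = entmax_p z \<alpha>"
  define W where "W = (\<Sum>i\<in>S. p i powr (2 - \<alpha>))"
  obtain T where T: "(entmax_tau z has_real_derivative T) (at \<alpha>)"
    using assms(2) by (auto simp: real_differentiable_def)
  let ?G = "\<lambda>a. \<Sum>i\<in>S. ((a - 1) * (z i - entmax_tau z a)) powr (1 / (a - 1))"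
  have "(?G has_real_derivative
          (\<Sum>i\<in>S. p i / (\<alpha> - 1)^2 - p i * ln (p i) / (\<alpha> - 1) - T * p i powr (2 - \<alpha>))) (at \<alpha>)"
  proof (rule DERIV_sum)
    fix i assume "i \<in> S"
    then show "((\<lambda>a. ((a - 1) * (z i - entmax_tau z a)) powr (1 / (a - 1))) has_real_derivative
        p i / (\<alpha> - 1)^2 - p i * ln (p i) / (\<alpha> - 1) - T * p i powr (2 - \<alpha>)) (at \<alpha>)"
      unfolding S_def p_def entmax_p_in_support[OF \<open>i \<in> S\<close>[unfolded S_def]]
      using has_real_derivative_entmax_summand[OF assms(1) T] by (simp add: in_entmax_support_iff)
  qed
  moreover have "(?G has_real_derivative 0) (at \<alpha>)"
    using entmax_summands_eventually_sum_1[OF assms(1,3)] unfolding S_def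
    by (subst DERIV_cong_ev[OF refl _ refl]) (auto intro: DERIV_const)
  ultimately have "0 = (\<Sum>i\<in>S. p i / (\<alpha> - 1)^2 - p i * ln (p i) / (\<alpha> - 1) - T * p i powr (2 - \<alpha>))"
    by (rule DERIV_unique[symmetric])
  also have "\<dots> = 1 / (\<alpha> - 1)^2 + shannon_entropy p / (\<alpha> - 1) - T * W"
    using sum_entmax_p_support[OF assms(1), of z]
    by (simp add: S_def p_def W_def shannon_entropy_entmax_p sum_subtractf
        sum_divide_distrib[symmetric] sum_distrib_left)
  finally have "T * W = 1 / (\<alpha> - 1)^2 + shannon_entropy p / (\<alpha> - 1)" by simp
  moreover have "W > 0"
    unfolding W_def S_def p_def using entmax_support_nonempty[OF assms(1)]
    by (intro sum_pos) (auto simp: entmax_support_def)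
  ultimately have "T = (1 / (\<alpha> - 1)^2 + shannon_entropy p / (\<alpha> - 1)) / W"
    by (simp add: eq_divide_eq)
  with T show ?thesis
    by (simp add: S_def p_def W_def)
qed

end
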